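(* Let $I\subset K[x,y]$ be a monomial ideal. Then the following are equivalent: (1) $I$ satisfies the non-pure dual exchange property; (2) $I$ satisfies the non-pure exchange property; (3) $I$ is componentwise polymatroidal.
   Context: For a monomial $u$, $\deg_{x_i}(u)$ is the exponent of the variable $x_i$ in $u$; $G(I)$ is the minimal monomial generating set. A monomial ideal generated in a single degree is polymatroidal if for all $u,v\in G(I)$ and all $i$ with $\deg_{x_i}(u)>\deg_{x_i}(v)$ there exists $j$ with $\deg_{x_j}(u)<\deg_{x_j}(v)$ and $x_j(u/x_i)\in I$. $I_{\langle j\rangle}$ denotes the ideal generated by all monomials of degree $j$ in $I$; $I$ is componentwise polymatroidal if every nonzero $I_{\langle j\rangle}$ is polymatroidal. $I$ satisfies the non-pure exchange property if for all $u,v \in G(I)$ with $\deg(u)\leq \deg(v)$ and all $i$ with $\deg_{x_i}(v) > \deg_{x_i}(u)$, there exists $j$ with $\deg_{x_j}(v)< \deg_{x_j}(u)$ and $x_j(v/x_i) \in I$. $I$ satisfies the non-pure dual exchange property if for all $u,v \in G(I)$ with $\deg(u) \leq \deg(v)$ and all $i$ with $\deg_{x_i}(v) < \deg_{x_i}(u)$, there exists $j$ with $\deg_{x_j}(v) > \deg_{x_j}(u)$ and $x_i(v/x_j) \in I$. *)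

theory Defs
  imports Main
begin

text \<open>Monomials in the polynomial ring K[x_0,...,x_{n-1}] are represented by their
exponent vectors u :: nat => nat (deg_{x_i}(u) = u i), vanishing outside {0..<n}.
A monomial ideal is represented by the set of monomials it contains (which determines
it uniquely, independently of the field K): an upward closed set of monomials
w.r.t. divisibility.\<close>

definition monomials :: "nat \<Rightarrow> (nat \<Rightarrow> nat) set" where
  "monomials n = {u. \<forall>i\<ge>n. u i = 0}"

definition mdvd :: "(nat \<Rightarrow> nat) \<Rightarrow> (nat \<Rightarrow> nat) \<Rightarrow> bool" where
  "mdvd u v \<longleftrightarrow> (\<forall>i. u i \<le> v i)"

definition mono_ideal :: "nat \<Rightarrow> (nat \<Rightarrow> nat) set \<Rightarrow> bool" where
  "mono_ideal n I \<longleftrightarrow> I \<subseteq> monomials n \<and>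
     (\<forall>u\<in>I. \<forall>v\<in>monomials n. mdvd u v \<longrightarrow> v \<in> I)"

definition mdeg :: "nat \<Rightarrow> (nat \<Rightarrow> nat) \<Rightarrow> nat" where
  "mdeg n u = (\<Sum>i<n. u i)"

text \<open>x_j * (u / x_i) (used only when x_i divides u).\<close>
definition swapvar :: "nat \<Rightarrow> nat \<Rightarrow> (nat \<Rightarrow> nat) \<Rightarrow> (nat \<Rightarrow> nat)" where
  "swapvar j i u = (u(i := u i - 1))(j := (u(i := u i - 1)) j + 1)"

definition gens :: "(nat \<Rightarrow> nat) set \<Rightarrow> (nat \<Rightarrow> nat) set" where
  "gens I = {u \<in> I. \<forall>v\<in>I. mdvd v u \<longrightarrow> v = u}"

definition comp_ideal :: "nat \<Rightarrow> (nat \<Rightarrow> nat) set \<Rightarrow> nat \<Rightarrow> (nat \<Rightarrow> nat) set" where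
  "comp_ideal n I d = {w \<in> monomials n. \<exists>u\<in>I. mdeg n u = d \<and> mdvd u w}"

definition polymatroidal :: "nat \<Rightarrow> (nat \<Rightarrow> nat) set \<Rightarrow> bool" where
  "polymatroidal n I \<longleftrightarrow>
     (\<exists>d. \<forall>u\<in>gens I. mdeg n u = d) \<and>
     (\<forall>u\<in>gens I. \<forall>v\<in>gens I. \<forall>i<n. u i > v i \<longrightarrow>
        (\<exists>j<n. u j < v j \<and> swapvar j i u \<in> I))"

definition componentwise_polymatroidal :: "nat \<Rightarrow> (nat \<Rightarrow> nat) set \<Rightarrow> bool" where
  "componentwise_polymatroidal n I \<longleftrightarrow>
     (\<forall>d. comp_ideal n I d \<noteq> {} \<longrightarrow> polymatroidal n (comp_ideal n I d))"

definition nonpure_exchange :: "nat \<Rightarrow> (nat \<Rightarrow> nat) set \<Rightarrow> bool" where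
  "nonpure_exchange n I \<longleftrightarrow>
     (\<forall>u\<in>gens I. \<forall>v\<in>gens I. mdeg n u \<le> mdeg n v \<longrightarrow>
        (\<forall>i<n. v i > u i \<longrightarrow> (\<exists>j<n. v j < u j \<and> swapvar j i v \<in> I)))"

definition nonpure_dual_exchange :: "nat \<Rightarrow> (nat \<Rightarrow> nat) set \<Rightarrow> bool" where
  "nonpure_dual_exchange n I \<longleftrightarrow>
     (\<forall>u\<in>gens I. \<forall>v\<in>gens I. mdeg n u \<le> mdeg n v \<longrightarrow>
        (\<forall>i<n. v i < u i \<longrightarrow> (\<exists>j<n. v j > u j \<and> swapvar i j v \<in> I)))"

end

theory Submission
  imports Defs
begin

text \<open>In two variables the index \<open>j\<close> in each exchange condition can only be the other variable, and the
  minimal generators are ordered oppositely in the two exponents. Hence both non-pure exchange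
  properties say the same thing: for generators \<open>u, v\<close> with \<open>deg u \<le> deg v\<close> and \<open>u\<^sub>i < v\<^sub>i\<close>,
  \<open>x\<^bsub>1-i\<^esub> v / x\<^sub>i \<in> I\<close>; and componentwise polymatroidality says the same for any two monomials of
  \<open>I\<close> of equal degree. Padding \<open>u\<close> up to the degree of \<open>v\<close> gives one direction. For the other, a
  monomial \<open>w \<in> I\<close> with \<open>w\<^sub>i < u\<^sub>i\<close> and \<open>deg w \<le> deg u\<close> is repeatedly exchanged against the
  generator below \<open>u\<close>; its \<open>x\<^bsub>1-i\<^esub>\<close>-degree drops until a generator divides \<open>x\<^bsub>1-i\<^esub> u / x\<^sub>i\<close>.\<close>

lemma mdeg_less_of_mdvd:
  assumes "w \<in> monomials n" "s \<in> monomials n" "mdvd w s" "w \<noteq> s"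
  shows "mdeg n w < mdeg n s"
proof -
  obtain i where ne: "w i \<noteq> s i" using assms(4) by blast
  have "i < n"
  proof (rule ccontr)
    assume "\<not> i < n"
    then have "w i = 0" "s i = 0" using assms(1,2) unfolding monomials_def by auto
    with ne show False by simp
  qed
  moreover have "w i < s i" using assms(3) ne unfolding mdvd_def by (simp add: le_neq_trans)
  ultimately show ?thesis
    using assms(3) unfolding mdeg_def mdvd_def by (intro sum_strict_mono_ex1) auto
qed

lemma eq_of_mdvd_of_mdeg_eq:
  assumes "w \<in> monomials n" "s \<in> monomials n" "mdvd w s" "mdeg n w = mdeg n s"
  shows "w = s"
  using mdeg_less_of_mdvd[OF assms(1-3)] assms(4) by auto

lemma mdeg_swapvar:
  assumes "i < n" "j < n" "i \<noteq> j" "0 < v i"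
  shows "mdeg n (swapvar j i v) = mdeg n v"
proof -
  define B where "B = {..<n} - {i, j}"
  have ij_B: "{..<n} = insert i (insert j B)" using assms(1,2) unfolding B_def by auto
  have "finite B" "i \<notin> B" "j \<notin> B" unfolding B_def by auto
  then have split: "mdeg n w = w i + w j + sum w B" for w
    using assms(3) unfolding mdeg_def ij_B by (simp add: add.assoc)
  have "sum (swapvar j i v) B = sum v B"
    by (rule sum.cong) (auto simp: swapvar_def B_def)
  then show ?thesis
    using assms(3,4) split[of v] split[of "swapvar j i v"] by (simp add: swapvar_def)
qed

lemma swapvar_apply_source: "i \<noteq> j \<Longrightarrow> swapvar j i v i = v i - 1"
  by (simp add: swapvar_def)

lemma swapvar_apply_target: "i \<noteq> j \<Longrightarrow> swapvar j i v j = v j + 1"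
  by (simp add: swapvar_def)

lemma swapvar_in_monomials:
  "i < n \<Longrightarrow> j < n \<Longrightarrow> v \<in> monomials n \<Longrightarrow> swapvar j i v \<in> monomials n"
  unfolding monomials_def swapvar_def by auto

lemma mono_ideal_subset_monomials: "mono_ideal n I \<Longrightarrow> I \<subseteq> monomials n"
  unfolding mono_ideal_def by blast

lemma mono_ideal_mdvd_closed:
  "mono_ideal n I \<Longrightarrow> u \<in> I \<Longrightarrow> v \<in> monomials n \<Longrightarrow> mdvd u v \<Longrightarrow> v \<in> I"
  unfolding mono_ideal_def by blast

lemma gens_subset: "gens I \<subseteq> I"
  unfolding gens_def by blast

lemma ex_gens_mdvd:
  assumes "mono_ideal n I" "w \<in> I"
  shows "\<exists>g\<in>gens I. mdvd g w"
  using assms(2)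
proof (induction "mdeg n w" arbitrary: w rule: less_induct)
  case less
  show ?case
  proof (cases "w \<in> gens I")
    case True
    then show ?thesis by (auto simp: mdvd_def)
  next
    case False
    then obtain v where v: "v \<in> I" "mdvd v w" "v \<noteq> w"
      using less.prems unfolding gens_def by auto
    have "mdeg n v < mdeg n w"
      using assms(1) less.prems v by (intro mdeg_less_of_mdvd) (auto simp: mono_ideal_def)
    then obtain g where "g \<in> gens I" "mdvd g v" using less.hyps v(1) by blast
    then show ?thesis using v(2) unfolding mdvd_def by (meson order.trans)
  qed
qed

lemma mem_comp_ideal_mdeg_iff:
  assumes "mono_ideal n I" "u \<in> monomials n"
  shows "u \<in> comp_ideal n I (mdeg n u) \<longleftrightarrow> u \<in> I"
proof
  assume "u \<in> comp_ideal n I (mdeg n u)"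
  then obtain w where "w \<in> I" "mdeg n w = mdeg n u" "mdvd w u"
    unfolding comp_ideal_def by blast
  then show "u \<in> I"
    using eq_of_mdvd_of_mdeg_eq assms mono_ideal_subset_monomials by blast
qed (use assms in \<open>auto simp: comp_ideal_def mdvd_def\<close>)

lemma gens_comp_ideal:
  assumes "mono_ideal n I"
  shows "gens (comp_ideal n I d) = {u \<in> I. mdeg n u = d}"
proof (intro equalityI subsetI)
  fix u assume u: "u \<in> gens (comp_ideal n I d)"
  then obtain w where w: "w \<in> I" "mdeg n w = d" "mdvd w u"
    unfolding gens_def comp_ideal_def by blast
  have "w \<in> comp_ideal n I d"
    using assms w mono_ideal_subset_monomials by (auto simp: comp_ideal_def mdvd_def)
  then have "w = u" using u w(3) unfolding gens_def by blast
  then show "u \<in> {u \<in> I. mdeg n u = d}" using w by simp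
next
  fix u assume u: "u \<in> {u \<in> I. mdeg n u = d}"
  then have um: "u \<in> monomials n" using assms mono_ideal_subset_monomials by blast
  have "v = u" if v: "v \<in> comp_ideal n I d" "mdvd v u" for v
  proof -
    obtain w where w: "w \<in> I" "mdeg n w = d" "mdvd w v"
      using v(1) unfolding comp_ideal_def by blast
    have "mdvd w u" using w(3) v(2) unfolding mdvd_def using order.trans by blast
    then have "w = u"
      using eq_of_mdvd_of_mdeg_eq[OF _ um] assms w u mono_ideal_subset_monomials by auto
    then show "v = u" using w(3) v(2) unfolding mdvd_def by (simp add: antisym ext)
  qed
  moreover have "u \<in> comp_ideal n I d" using u um by (auto simp: comp_ideal_def mdvd_def)
  ultimately show "u \<in> gens (comp_ideal n I d)" unfolding gens_def by blast
qed

lemma other_index_2: "i < 2 \<Longrightarrow> 1 - i < 2 \<and> 1 - i \<noteq> i \<and> 1 - (1 - i) = (i::nat)"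
  by arith

lemma eq_other_index_2: "i < 2 \<Longrightarrow> j < 2 \<Longrightarrow> j \<noteq> i \<Longrightarrow> j = 1 - (i::nat)"
  by auto

lemma mdeg_2: "i < 2 \<Longrightarrow> mdeg 2 u = u i + u (1 - i)"
  by (auto simp: mdeg_def numeral_2_eq_2 less_Suc_eq)

lemma mdvd_2_iff:
  assumes "u \<in> monomials 2" "i < 2"
  shows "mdvd u v \<longleftrightarrow> u i \<le> v i \<and> u (1 - i) \<le> v (1 - i)"
proof
  assume le: "u i \<le> v i \<and> u (1 - i) \<le> v (1 - i)"
  show "mdvd u v" unfolding mdvd_def
  proof
    fix l show "u l \<le> v l"
    proof (cases "l < 2")
      case True
      then have "l = i \<or> l = 1 - i" using assms(2) by arith
      then show ?thesis using le by blast
    next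
      case False
      then show ?thesis using assms(1) unfolding monomials_def by simp
    qed
  qed
qed (simp add: mdvd_def)

lemma gens_2_antitone:
  assumes "mono_ideal 2 I" "u \<in> gens I" "v \<in> gens I" "i < 2" "v i < u i"
  shows "u (1 - i) < v (1 - i)"
proof (rule ccontr)
  assume "\<not> ?thesis"
  moreover have "v \<in> monomials 2"
    using assms(1,3) gens_subset mono_ideal_subset_monomials by blast
  ultimately have "mdvd v u" using assms(5) mdvd_2_iff[OF _ assms(4)] by simp
  then show False using assms(2,3,5) unfolding gens_def by auto
qed

definition gens_exchange2 :: "(nat \<Rightarrow> nat) set \<Rightarrow> bool" where
  "gens_exchange2 I \<longleftrightarrow> (\<forall>u\<in>gens I. \<forall>v\<in>gens I. mdeg 2 u \<le> mdeg 2 v \<longrightarrow>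
     (\<forall>i<2. u i < v i \<longrightarrow> swapvar (1 - i) i v \<in> I))"

definition degree_exchange2 :: "(nat \<Rightarrow> nat) set \<Rightarrow> bool" where
  "degree_exchange2 I \<longleftrightarrow> (\<forall>u\<in>I. \<forall>v\<in>I. mdeg 2 u = mdeg 2 v \<longrightarrow>
     (\<forall>i<2. v i < u i \<longrightarrow> swapvar (1 - i) i u \<in> I))"

lemma nonpure_exchange_2_iff:
  assumes "mono_ideal 2 I"
  shows "nonpure_exchange 2 I \<longleftrightarrow> gens_exchange2 I"
proof
  assume h: "nonpure_exchange 2 I"
  show "gens_exchange2 I" unfolding gens_exchange2_def
  proof (intro ballI allI impI)
    fix u v i assume uv: "u \<in> gens I" "v \<in> gens I" "mdeg 2 u \<le> mdeg 2 v" and i: "i < 2" "u i < v i"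
    then obtain j where "j < 2" "v j < u j" "swapvar j i v \<in> I"
      using h unfolding nonpure_exchange_def by blast
    with i show "swapvar (1 - i) i v \<in> I" using eq_other_index_2 by force
  qed
next
  assume h: "gens_exchange2 I"
  show "nonpure_exchange 2 I" unfolding nonpure_exchange_def
  proof (intro ballI allI impI)
    fix u v i assume uv: "u \<in> gens I" "v \<in> gens I" "mdeg 2 u \<le> mdeg 2 v" and i: "i < 2" "u i < v i"
    then have "v (1 - i) < u (1 - i)" "swapvar (1 - i) i v \<in> I"
      using gens_2_antitone[OF assms] h unfolding gens_exchange2_def by blast+
    then show "\<exists>j<2. v j < u j \<and> swapvar j i v \<in> I" using other_index_2[OF i(1)] by blast
  qed
qed

lemma nonpure_dual_exchange_2_iff:
  assumes "mono_ideal 2 I"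
  shows "nonpure_dual_exchange 2 I \<longleftrightarrow> gens_exchange2 I"
proof
  assume h: "nonpure_dual_exchange 2 I"
  show "gens_exchange2 I" unfolding gens_exchange2_def
  proof (intro ballI allI impI)
    fix u v i assume uv: "u \<in> gens I" "v \<in> gens I" "mdeg 2 u \<le> mdeg 2 v" and i: "i < 2" "u i < v i"
    have lt: "v (1 - i) < u (1 - i)" using gens_2_antitone[OF assms uv(2,1) i] .
    then obtain j where j: "j < 2" "u j < v j" "swapvar (1 - i) j v \<in> I"
      using h uv other_index_2[OF i(1)] unfolding nonpure_dual_exchange_def by blast
    have "j \<noteq> 1 - i" using j(2) lt by auto
    then have "j = i" using eq_other_index_2[of "1 - i" j] other_index_2[OF i(1)] j(1) by simp
    then show "swapvar (1 - i) i v \<in> I" using j(3) by simp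
  qed
next
  assume h: "gens_exchange2 I"
  show "nonpure_dual_exchange 2 I" unfolding nonpure_dual_exchange_def
  proof (intro ballI allI impI)
    fix u v i assume uv: "u \<in> gens I" "v \<in> gens I" "mdeg 2 u \<le> mdeg 2 v" and i: "i < 2" "v i < u i"
    have lt: "u (1 - i) < v (1 - i)" using gens_2_antitone[OF assms uv(1,2) i] .
    then have "swapvar (1 - (1 - i)) (1 - i) v \<in> I"
      using h uv other_index_2[OF i(1)] unfolding gens_exchange2_def by blast
    then show "\<exists>j<2. u j < v j \<and> swapvar i j v \<in> I" using lt other_index_2[OF i(1)] by auto
  qed
qed

lemma swapvar_mem_comp_ideal_iff:
  assumes "mono_ideal n I" "u \<in> monomials n" "i < n" "j < n" "i \<noteq> j" "0 < u i"
  shows "swapvar j i u \<in> comp_ideal n I (mdeg n u) \<longleftrightarrow> swapvar j i u \<in> I"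
  using mem_comp_ideal_mdeg_iff[OF assms(1) swapvar_in_monomials[OF assms(3,4,2)]]
    mdeg_swapvar[of i n j u, OF assms(3-6)]
  by simp

lemma componentwise_polymatroidal_2_iff:
  assumes "mono_ideal 2 I"
  shows "componentwise_polymatroidal 2 I \<longleftrightarrow> degree_exchange2 I"
proof
  assume h: "componentwise_polymatroidal 2 I"
  show "degree_exchange2 I" unfolding degree_exchange2_def
  proof (intro ballI allI impI)
    fix u v i assume uv: "u \<in> I" "v \<in> I" "mdeg 2 u = mdeg 2 v" and i: "i < 2" "v i < u i"
    let ?J = "comp_ideal 2 I (mdeg 2 u)"
    have um: "u \<in> monomials 2" using assms uv(1) mono_ideal_subset_monomials by blast
    then have "polymatroidal 2 ?J"
      using h uv(1) mem_comp_ideal_mdeg_iff[OF assms] unfolding componentwise_polymatroidal_def by blast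
    moreover have "u \<in> gens ?J" "v \<in> gens ?J" using gens_comp_ideal[OF assms] uv by auto
    ultimately obtain j where j: "j < 2" "u j < v j" "swapvar j i u \<in> ?J"
      using i unfolding polymatroidal_def by blast
    have "j \<noteq> i" using j(2) i(2) by auto
    then have "j = 1 - i" using eq_other_index_2[OF i(1) j(1)] by blast
    then show "swapvar (1 - i) i u \<in> I"
      using j(3) swapvar_mem_comp_ideal_iff[OF assms um i(1) _ _] other_index_2[OF i(1)] i(2) by simp
  qed
next
  assume h: "degree_exchange2 I"
  show "componentwise_polymatroidal 2 I"
    unfolding componentwise_polymatroidal_def polymatroidal_def gens_comp_ideal[OF assms]
  proof (intro allI impI conjI ballI)
    fix d u v i assume uv: "u \<in> {u \<in> I. mdeg 2 u = d}" "v \<in> {u \<in> I. mdeg 2 u = d}"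
      and i: "i < 2" "v i < u i"
    have um: "u \<in> monomials 2" using assms uv(1) mono_ideal_subset_monomials by blast
    have "swapvar (1 - i) i u \<in> I" using h uv i unfolding degree_exchange2_def by auto
    then have "swapvar (1 - i) i u \<in> comp_ideal 2 I d"
      using swapvar_mem_comp_ideal_iff[OF assms um i(1) _ _] other_index_2[OF i(1)] uv(1) i(2) by simp
    moreover have "u (1 - i) < v (1 - i)"
      using uv mdeg_2[OF i(1), of u] mdeg_2[OF i(1), of v] i(2) by simp
    ultimately show "\<exists>j<2. u j < v j \<and> swapvar j i u \<in> comp_ideal 2 I d"
      using other_index_2[OF i(1)] by blast
  qed blast
qed

lemma gens_exchange2_if_degree_exchange2:
  assumes I: "mono_ideal 2 I" and h: "degree_exchange2 I"
  shows "gens_exchange2 I"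
  unfolding gens_exchange2_def
proof (intro ballI allI impI)
  fix u v i assume u: "u \<in> gens I" and v: "v \<in> gens I" and d: "mdeg 2 u \<le> mdeg 2 v"
    and i: "i < 2" "u i < v i"
  define u' where "u' = u(1 - i := u (1 - i) + (mdeg 2 v - mdeg 2 u))"
  have um: "u \<in> monomials 2" using u I gens_subset mono_ideal_subset_monomials by blast
  then have u'm: "u' \<in> monomials 2"
    using other_index_2[OF i(1)] unfolding u'_def monomials_def by auto
  have u': "u' i = u i" "u' (1 - i) = u (1 - i) + (mdeg 2 v - mdeg 2 u)"
    using other_index_2[OF i(1)] unfolding u'_def by auto
  have "mdvd u u'" using mdvd_2_iff[OF um i(1)] u' by simp
  then have "u' \<in> I" using mono_ideal_mdvd_closed[OF I _ u'm] u gens_subset by blast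
  moreover have "mdeg 2 u' = mdeg 2 v" using mdeg_2[OF i(1)] u' d by simp
  ultimately show "swapvar (1 - i) i v \<in> I"
    using h v gens_subset i u'(1) unfolding degree_exchange2_def by (metis subsetD)
qed

lemma swapvar_2_mem_if_mdvd:
  assumes "mono_ideal 2 I" "i < 2" "u \<in> monomials 2" "g \<in> I"
    and "g i \<le> u i - 1" "g (1 - i) \<le> u (1 - i) + 1"
  shows "swapvar (1 - i) i u \<in> I"
proof -
  have "g \<in> monomials 2" using assms(1,4) mono_ideal_subset_monomials by blast
  then have "mdvd g (swapvar (1 - i) i u)"
    using mdvd_2_iff[OF _ assms(2)] assms(5,6) other_index_2[OF assms(2)]
    by (simp add: swapvar_apply_source swapvar_apply_target)
  then show ?thesis
    using mono_ideal_mdvd_closed[OF assms(1,4)] swapvar_in_monomials assms(2,3) other_index_2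
    by blast
qed

lemma gens_exchange2_step:
  assumes I: "mono_ideal 2 I" and ex: "gens_exchange2 I" and i: "i < 2" and u: "u \<in> I"
    and w: "w \<in> gens I" "w i < u i" "mdeg 2 w \<le> mdeg 2 u"
    and notin: "swapvar (1 - i) i u \<notin> I"
  shows "\<exists>w'\<in>I. w' i < u i \<and> mdeg 2 w' \<le> mdeg 2 u \<and> w' (1 - i) < w (1 - i)"
proof -
  define k where "k = 1 - i"
  have k: "k < 2" "i \<noteq> k" "k \<noteq> i" "1 - k = i" using other_index_2[OF i] unfolding k_def by auto
  have um: "u \<in> monomials 2" using I u mono_ideal_subset_monomials by blast
  have not_below: "\<not> (g i \<le> u i - 1 \<and> g k \<le> u k + 1)" if "g \<in> I" for g
    using swapvar_2_mem_if_mdvd[OF I i um that] notin unfolding k_def by blast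
  have wk: "u k + 1 < w k" using not_below w(1,2) gens_subset by fastforce
  obtain u0 where u0: "u0 \<in> gens I" "mdvd u0 u" using ex_gens_mdvd[OF I u] by blast
  have u0I: "u0 \<in> I" and u0m: "u0 \<in> monomials 2"
    using u0(1) I gens_subset mono_ideal_subset_monomials by blast+
  have u0_le: "u0 i \<le> u i" "u0 k \<le> u k" using u0(2) mdvd_2_iff[OF u0m i] k_def by auto
  have u0i: "u0 i = u i" using not_below[OF u0I] u0_le by linarith
  have deg: "mdeg 2 u0 < mdeg 2 w"
  proof (rule ccontr)
    assume "\<not> ?thesis"
    then have "swapvar k i u0 \<in> I"
      using ex u0(1) w(1,2) i u0i k_def unfolding gens_exchange2_def by auto
    moreover have "swapvar k i u0 i = u i - 1" "swapvar k i u0 k \<le> u k + 1"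
      using k(2) u0i u0_le(2) by (simp_all add: swapvar_apply_source swapvar_apply_target)
    ultimately show False using not_below[of "swapvar k i u0"] by simp
  qed
  define w' where "w' = swapvar i k w"
  have "\<forall>l<2. u0 l < w l \<longrightarrow> swapvar (1 - l) l w \<in> I"
    using ex u0(1) w(1) deg unfolding gens_exchange2_def by auto
  then have "swapvar (1 - k) k w \<in> I" using k(1) wk u0_le(2) by auto
  then have "w' \<in> I" unfolding w'_def k(4) .
  moreover have "w' k = w k - 1" "w' i = w i + 1"
    using k(3) unfolding w'_def by (simp_all add: swapvar_apply_source swapvar_apply_target)
  moreover have "w i + w k \<le> u i + u k" using w(3) mdeg_2[OF i] k_def by metis
  moreover have "mdeg 2 w' = mdeg 2 w"
    unfolding w'_def using k wk i by (intro mdeg_swapvar) auto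
  ultimately show ?thesis using w(3) wk k_def by (intro bexI[of _ w']) auto
qed

lemma gens_exchange2_descent:
  assumes I: "mono_ideal 2 I" and ex: "gens_exchange2 I" and i: "i < 2" and u: "u \<in> I"
    and w: "w \<in> I" "w i < u i" "mdeg 2 w \<le> mdeg 2 u"
  shows "swapvar (1 - i) i u \<in> I"
  using w
proof (induction "w (1 - i)" arbitrary: w rule: less_induct)
  case less
  obtain g where g: "g \<in> gens I" "mdvd g w" using ex_gens_mdvd[OF I less.prems(1)] by blast
  have "g \<in> monomials 2" using g(1) I gens_subset mono_ideal_subset_monomials by blast
  then have g_le: "g i \<le> w i" "g (1 - i) \<le> w (1 - i)" using g(2) mdvd_2_iff[OF _ i] by auto
  have gi: "g i < u i" using g_le(1) less.prems(2) by linarith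
  have dg: "mdeg 2 g \<le> mdeg 2 u"
    using g_le less.prems(3) mdeg_2[OF i, of g] mdeg_2[OF i, of w] by linarith
  show ?case
  proof (rule ccontr)
    assume notin: "swapvar (1 - i) i u \<notin> I"
    then obtain w' where "w' \<in> I" "w' i < u i" "mdeg 2 w' \<le> mdeg 2 u" "w' (1 - i) < g (1 - i)"
      using gens_exchange2_step[OF I ex i u g(1) gi dg] by blast
    then show False using less.hyps g_le(2) notin by fastforce
  qed
qed

lemma degree_exchange2_if_gens_exchange2:
  assumes "mono_ideal 2 I" "gens_exchange2 I"
  shows "degree_exchange2 I"
  unfolding degree_exchange2_def
  using gens_exchange2_descent[OF assms] by (metis order.refl)

theorem proposition2p5:
  fixes I :: "(nat \<Rightarrow> nat) set"
  assumes "mono_ideal 2 I"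
  shows "(nonpure_dual_exchange 2 I \<longleftrightarrow> nonpure_exchange 2 I) \<and>
         (nonpure_exchange 2 I \<longleftrightarrow> componentwise_polymatroidal 2 I)"
  using nonpure_dual_exchange_2_iff[OF assms] nonpure_exchange_2_iff[OF assms]
    componentwise_polymatroidal_2_iff[OF assms] gens_exchange2_if_degree_exchange2[OF assms]
    degree_exchange2_if_gens_exchange2[OF assms]
  by blast

end
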